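(* Assume that $\nabla\kappa_S(0)=(m_1,\ldots,m_h)\neq 0$. Then we have the following cases. $(i)$ If there exists $i\in\{1,\ldots,h\}$ such that $x_im_i<0$, then $I_{\mathrm{MD}}(x;\nabla\kappa_S(0))=\infty$. $(ii)$ If there exists $i\in\{1,\ldots,h\}$ such that $m_i=0$ and $x_i\neq 0$, then $I_{\mathrm{MD}}(x;\nabla\kappa_S(0))=\infty$. $(iii)$ If there exists $c(x)\geq 0$ such that $x_i=c(x)m_i$ for every $i\in\{1,\ldots,h\}$, then $I_{\mathrm{MD}}(x;\nabla\kappa_S(0))=H_\nu(c(x);1)$ or, equivalently, $I_{\mathrm{MD}}(x;\nabla\kappa_S(0))=H_\nu(x_i;m_i)$ for every $i\in\{1,\ldots,h\}$.
   Context: Let $\{S(t):t\geq 0\}$ be an $\mathbb{R}^h$-valued Lévy process such that $\kappa_S(\theta):=\log\mathbb{E}[e^{\langle\theta,S(1)\rangle}]$ is finite in a neighborhood of the origin of $\mathbb{R}^h$ (where $\langle\cdot,\cdot\rangle$ is the inner product in $\mathbb{R}^h$), and let $\nu\in(0,1)$ and $\{L_\nu(t):t\geq 0\}$ be an inverse stable subordinator independent of $\{S(t)\}$. For $x=(x_1,\ldots,x_h)\in\mathbb{R}^h$ and $\nabla\kappa_S(0)\neq 0$, the (noncentral moderate deviation) rate function is defined by $$I_{\mathrm{MD}}(x;\nabla\kappa_S(0)):=\sup_{\theta\in\mathbb{R}^h}\{\langle\theta,x\rangle-(\langle\theta,\nabla\kappa_S(0)\rangle)^{1/\nu}1_{\langle\theta,\nabla\kappa_S(0)\rangle\geq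 0}\}$$ (it governs the LDP, with speed $1/a_t$, of $\{(a_tt)^{1-\nu}S(L_\nu(t))/t\}$ for $a_t\to 0$, $ta_t\to\infty$). For real $x$ and $m\neq 0$ define $$H_\nu(x;m):=\begin{cases}(\nu^{\nu/(1-\nu)}-\nu^{1/(1-\nu)})\left(\frac{x}{m}\right)^{1/(1-\nu)}&\text{if } \frac{x}{m}\geq 0\\ \infty&\text{if } \frac{x}{m}<0.\end{cases}$$ *)

theory Defs
  imports "HOL-Analysis.Analysis"
begin

definition I_MD :: "real \<Rightarrow> real^'n \<Rightarrow> real^'n \<Rightarrow> ereal" where
  "I_MD \<nu> x m = (SUP \<theta>\<in>UNIV. ereal (\<theta> \<bullet> x -
      (if \<theta> \<bullet> m \<ge> 0 then (\<theta> \<bullet> m) powr (1 / \<nu>) else 0)))"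

definition H_nu :: "real \<Rightarrow> real \<Rightarrow> real \<Rightarrow> ereal" where
  "H_nu \<nu> x m = (if x / m \<ge> 0
     then ereal ((\<nu> powr (\<nu> / (1 - \<nu>)) - \<nu> powr (1 / (1 - \<nu>))) * (x / m) powr (1 / (1 - \<nu>)))
     else \<infinity>)"

end

theory Submission
  imports Defs
begin

text \<open>If some coordinate has \<open>x$i \<noteq> 0\<close> and \<open>x$i * m$i \<le> 0\<close>, moving \<open>\<theta>\<close> along that axis in the
  direction of \<open>x$i\<close> makes \<open>\<theta> \<bullet> x\<close> arbitrarily large while \<open>\<theta> \<bullet> m \<le> 0\<close>, so the subtracted term vanishes
  and \<open>I_MD = \<infinity>\<close>. If \<open>x = c *\<^sub>R m\<close> with \<open>c \<ge> 0\<close>, the objective depends on \<open>\<theta>\<close> only through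
  \<open>t = \<theta> \<bullet> m\<close>, which ranges over all of \<open>\<real>\<close>; hence \<open>I_MD\<close> is the one-dimensional Legendre
  transform of \<open>t\<^sub>+ powr (1/\<nu>)\<close> at \<open>c\<close>. Young's inequality bounds \<open>c t - t powr (1/\<nu>)\<close> by
  \<open>(1-\<nu>) \<nu> powr (\<nu>/(1-\<nu>)) c powr (1/(1-\<nu>))\<close>, with equality at \<open>t = (c \<nu>) powr (\<nu>/(1-\<nu>))\<close>.\<close>

definition pos_powr :: "real \<Rightarrow> real \<Rightarrow> real" where
  "pos_powr p t = (if t \<ge> 0 then t powr p else 0)"

lemma I_MD_eq_SUP_pos_powr:
  "I_MD \<nu> x m = (SUP \<theta>. ereal (\<theta> \<bullet> x - pos_powr (1 / \<nu>) (\<theta> \<bullet> m)))"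
  by (simp add: I_MD_def pos_powr_def)

lemma powr_diff_eq_one_minus_times_powr:
  fixes \<nu> :: real
  assumes "0 < \<nu>" "\<nu> < 1"
  shows "\<nu> powr (\<nu> / (1 - \<nu>)) - \<nu> powr (1 / (1 - \<nu>)) = (1 - \<nu>) * \<nu> powr (\<nu> / (1 - \<nu>))"
proof -
  have "1 / (1 - \<nu>) = 1 + \<nu> / (1 - \<nu>)" using assms by (simp add: field_simps)
  then have "\<nu> powr (1 / (1 - \<nu>)) = \<nu> * \<nu> powr (\<nu> / (1 - \<nu>))" using assms by (simp add: powr_add)
  then show ?thesis by (simp add: algebra_simps)
qed

lemma H_nu_eq_if_nonneg:
  assumes "0 < \<nu>" "\<nu> < 1" "x / m \<ge> 0"
  shows "H_nu \<nu> x m = ereal ((1 - \<nu>) * \<nu> powr (\<nu> / (1 - \<nu>)) * (x / m) powr (1 / (1 - \<nu>)))"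
  using assms by (simp add: H_nu_def powr_diff_eq_one_minus_times_powr)

lemma mult_minus_powr_le:
  fixes \<nu> k t :: real
  assumes "0 < \<nu>" "\<nu> < 1" "k \<ge> 0" "t \<ge> 0"
  shows "k * t - t powr (1 / \<nu>) \<le> (1 - \<nu>) * \<nu> powr (\<nu> / (1 - \<nu>)) * k powr (1 / (1 - \<nu>))"
proof (cases "k = 0 \<or> t = 0")
  case True
  then show ?thesis using assms by auto
next
  case False
  then have "k > 0" "t > 0" using assms by auto
  define a where "a = t powr (1 / \<nu>) / \<nu>"
  define b where "b = k powr (1 / (1 - \<nu>)) * \<nu> powr (\<nu> / (1 - \<nu>))"
  have "a > 0" "b > 0" using \<open>k > 0\<close> \<open>t > 0\<close> assms by (simp_all add: a_def b_def)
  then have "a powr \<nu> * b powr (1 - \<nu>) \<le> \<nu> * a + (1 - \<nu>) * b"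
    using Youngs_inequality_0[of \<nu> "1 - \<nu>" a b] assms by simp
  moreover have "a powr \<nu> = t / \<nu> powr \<nu>"
    using assms \<open>t > 0\<close> by (simp add: a_def powr_divide powr_powr)
  moreover have "b powr (1 - \<nu>) = k * \<nu> powr \<nu>"
    using assms \<open>k > 0\<close> by (simp add: b_def powr_mult powr_powr)
  moreover have "\<nu> * a = t powr (1 / \<nu>)" using assms by (simp add: a_def)
  ultimately have "k * t \<le> t powr (1 / \<nu>) + (1 - \<nu>) * b"
    using assms by (simp add: field_simps)
  then show ?thesis by (simp add: b_def algebra_simps)
qed

lemma mult_minus_powr_eq_at_maximiser:
  fixes \<nu> k :: real
  assumes "0 < \<nu>" "\<nu> < 1" "k \<ge> 0"
  defines "t \<equiv> (k * \<nu>) powr (\<nu> / (1 - \<nu>))"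
  shows "k * t - t powr (1 / \<nu>) = (1 - \<nu>) * \<nu> powr (\<nu> / (1 - \<nu>)) * k powr (1 / (1 - \<nu>))"
proof (cases "k = 0")
  case True
  then show ?thesis using assms by auto
next
  case False
  then have "k > 0" using assms by auto
  have exp_split: "1 / (1 - \<nu>) = 1 + \<nu> / (1 - \<nu>)" using assms by (simp add: field_simps)
  have "t powr (1 / \<nu>) = (k * \<nu>) powr (1 / (1 - \<nu>))"
    using assms by (simp add: powr_powr)
  also have "\<dots> = k * \<nu> * t"
    using assms \<open>k > 0\<close> by (subst exp_split) (simp add: powr_add)
  finally have "t powr (1 / \<nu>) = k * \<nu> * t" .
  moreover have "k powr (1 / (1 - \<nu>)) = k * k powr (\<nu> / (1 - \<nu>))"
    using \<open>k > 0\<close> by (subst exp_split) (simp add: powr_add)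
  moreover have "t = k powr (\<nu> / (1 - \<nu>)) * \<nu> powr (\<nu> / (1 - \<nu>))"
    using assms \<open>k > 0\<close> by (simp add: powr_mult)
  ultimately show ?thesis by (simp add: algebra_simps)
qed

lemma SUP_mult_minus_pos_powr:
  fixes \<nu> c :: real
  assumes "0 < \<nu>" "\<nu> < 1" "c \<ge> 0"
  shows "(SUP t. ereal (c * t - pos_powr (1 / \<nu>) t))
    = ereal ((1 - \<nu>) * \<nu> powr (\<nu> / (1 - \<nu>)) * c powr (1 / (1 - \<nu>)))"
    (is "?S = ereal ?V")
proof (rule antisym)
  show "?S \<le> ereal ?V"
  proof (rule SUP_least)
    fix t :: real
    show "ereal (c * t - pos_powr (1 / \<nu>) t) \<le> ereal ?V"
    proof (cases "t \<ge> 0")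
      case True
      then show ?thesis using mult_minus_powr_le[OF assms True] by (simp add: pos_powr_def)
    next
      case False
      then have "c * t \<le> 0" using assms(3) by (simp add: mult_nonneg_nonpos)
      moreover have "?V \<ge> 0" using assms by simp
      ultimately show ?thesis using False by (simp add: pos_powr_def)
    qed
  qed
next
  define t where "t = (c * \<nu>) powr (\<nu> / (1 - \<nu>))"
  have "ereal ?V = ereal (c * t - pos_powr (1 / \<nu>) t)"
    using mult_minus_powr_eq_at_maximiser[OF assms] by (simp add: t_def pos_powr_def)
  also have "\<dots> \<le> ?S" by (rule SUP_upper) simp
  finally show "ereal ?V \<le> ?S" .
qed

lemma range_inner_left_eq_UNIV:
  fixes m :: "'a :: real_inner"
  assumes "m \<noteq> 0"
  shows "range (\<lambda>\<theta>. \<theta> \<bullet> m) = UNIV"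
proof -
  have "t = ((t / (m \<bullet> m)) *\<^sub>R m) \<bullet> m" for t using assms by simp
  then show ?thesis by blast
qed

lemma I_MD_scaleR:
  assumes "0 < \<nu>" "\<nu> < 1" "m \<noteq> 0" "c \<ge> 0"
  shows "I_MD \<nu> (c *\<^sub>R m) m = ereal ((1 - \<nu>) * \<nu> powr (\<nu> / (1 - \<nu>)) * c powr (1 / (1 - \<nu>)))"
proof -
  have "I_MD \<nu> (c *\<^sub>R m) m = (SUP t \<in> range (\<lambda>\<theta>. \<theta> \<bullet> m). ereal (c * t - pos_powr (1 / \<nu>) t))"
    by (simp add: I_MD_eq_SUP_pos_powr image_image)
  also have "\<dots> = (SUP t. ereal (c * t - pos_powr (1 / \<nu>) t))"
    using range_inner_left_eq_UNIV[OF \<open>m \<noteq> 0\<close>] by simp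
  finally show ?thesis using SUP_mult_minus_pos_powr[OF assms(1,2,4)] by simp
qed

lemma I_MD_eq_infinity_if_coordinate:
  fixes x m :: "real^'n"
  assumes "x$i \<noteq> 0" "x$i * m$i \<le> 0"
  shows "I_MD \<nu> x m = \<infinity>"
  unfolding I_MD_eq_SUP_pos_powr top_ereal_def[symmetric] SUP_eq_top_iff
proof (intro allI impI)
  fix y :: ereal
  assume "y < top"
  then obtain B where "y \<le> ereal B" by (cases y) auto
  define \<theta> where "\<theta> = (axis i ((\<bar>B\<bar> + 1) / x$i) :: real^'n)"
  have "\<theta> \<bullet> x = \<bar>B\<bar> + 1" using assms by (simp add: \<theta>_def inner_axis')
  moreover have "\<theta> \<bullet> m = (\<bar>B\<bar> + 1) * (x$i * m$i) / (x$i)\<^sup>2"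
    using assms by (simp add: \<theta>_def inner_axis' power2_eq_square)
  then have "\<theta> \<bullet> m \<le> 0"
    using assms by (simp add: divide_nonpos_pos mult_nonneg_nonpos)
  ultimately have "ereal B < ereal (\<theta> \<bullet> x - pos_powr (1 / \<nu>) (\<theta> \<bullet> m))"
    by (auto simp: pos_powr_def)
  then show "\<exists>\<theta>\<in>UNIV. y < ereal (\<theta> \<bullet> x - pos_powr (1 / \<nu>) (\<theta> \<bullet> m))"
    using \<open>y \<le> ereal B\<close> by (meson UNIV_I le_less_trans)
qed

theorem proposition3p4:
  fixes \<nu> :: real and m x :: "real^'n"
  assumes "0 < \<nu>" and "\<nu> < 1" and "m \<noteq> 0"
  shows "((\<exists>i. x$i * m$i < 0) \<longrightarrow> I_MD \<nu> x m = \<infinity>)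
    \<and> ((\<exists>i. m$i = 0 \<and> x$i \<noteq> 0) \<longrightarrow> I_MD \<nu> x m = \<infinity>)
    \<and> (\<forall>c::real. c \<ge> 0 \<and> (\<forall>i. x$i = c * m$i) \<longrightarrow>
         I_MD \<nu> x m = H_nu \<nu> c 1 \<and> (\<forall>i. m$i \<noteq> 0 \<longrightarrow> I_MD \<nu> x m = H_nu \<nu> (x$i) (m$i)))"
proof (intro conjI impI allI)
  show "I_MD \<nu> x m = \<infinity>" if "\<exists>i. x$i * m$i < 0"
  proof -
    from that obtain i where "x$i * m$i < 0" by blast
    then have "x$i \<noteq> 0" by auto
    with \<open>x$i * m$i < 0\<close> show ?thesis by (simp add: I_MD_eq_infinity_if_coordinate)
  qed
  show "I_MD \<nu> x m = \<infinity>" if "\<exists>i. m$i = 0 \<and> x$i \<noteq> 0"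
    using that by (auto intro: I_MD_eq_infinity_if_coordinate)
next
  fix c :: real
  assume "c \<ge> 0 \<and> (\<forall>i. x$i = c * m$i)"
  then have "c \<ge> 0" and "x = c *\<^sub>R m" by (simp_all add: vec_eq_iff)
  then have I: "I_MD \<nu> x m = H_nu \<nu> c 1"
    using I_MD_scaleR H_nu_eq_if_nonneg assms by simp
  then show "I_MD \<nu> x m = H_nu \<nu> c 1" .
  fix i
  assume "m$i \<noteq> 0"
  then have "x$i / m$i = c" using \<open>x = c *\<^sub>R m\<close> by simp
  then show "I_MD \<nu> x m = H_nu \<nu> (x$i) (m$i)" using I by (simp add: H_nu_def)
qed

end
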